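(* Let $u$ be the solution of the time-fractional problem described in the context, let $\widehat u$ be its implicit piecewise-linear interpolant, $\psi=u-\widehat u$ and $\psi^n=\psi(t_n)$. Then for $1\le n\le N$, \[ \psi^n=\sum_{j=1}^n(-1)^{n+j+1}\Delta_j,\qquad \Delta_j=\frac{2}{\tau_j}\int_{I_j}(u-u_I)\,dt=-\frac{1}{\tau_j}\int_{I_j}(t_j-t)(t-t_{j-1})u''(t)\,dt. \]
   Context: $\Omega\subset\mathbb{R}^d$ ($d\le3$) convex polyhedron, $0<\alpha<1$, $\kappa\in W^{1,\infty}(\Omega)$, $\kappa\ge\kappa_{\min}>0$, $\mathcal{A}w=-\nabla\cdot(\kappa\nabla w)$; $u$ solves $\partial_t^\alpha u+\mathcal{A}u=f$ on $\Omega\times(0,T]$ with $u=0$ on $\partial\Omega$, $u(0)=u_0$, where $\partial_t^\alpha v(t)=\int_0^t\frac{(t-s)^{-\alpha}}{\Gamma(1-\alpha)}v'(s)\,ds$. Time mesh $t_n=(n\tau)^\gamma$, $0\le n\le N$, $\tau=T^{1/\gamma}/N$, $\gamma\ge1$, $\tau_n=t_n-t_{n-1}$, $I_n=(t_{n-1},t_n)$. The implicit interpolant $\widehat u$ is the continuous function on $[0,T]$, linear on each $\overline{I_n}$, with $\widehat u(0)=u_0$ and $\int_{I_n}\widehat u\,dt=\int_{I_n}u\,dt$ for $1\le n\le N$. $u_I$ is the usual continuous piecewise-linear interpolant: $u_I(t)=\frac{t_n-t}{\tau_n}u(t_{n-1})+\frac{t-t_{n-1}}{\tau_n}u(t_n)$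 for $t\in I_n$. *)

theory Defs
  imports "HOL-Analysis.Analysis"
begin

definition mesh_tau :: "real \<Rightarrow> real \<Rightarrow> nat \<Rightarrow> real" where
  "mesh_tau T \<gamma> N = T powr (1 / \<gamma>) / real N"

definition tmesh :: "real \<Rightarrow> real \<Rightarrow> nat \<Rightarrow> nat \<Rightarrow> real" where
  "tmesh T \<gamma> N n = (real n * mesh_tau T \<gamma> N) powr \<gamma>"

definition tstep :: "real \<Rightarrow> real \<Rightarrow> nat \<Rightarrow> nat \<Rightarrow> real" where
  "tstep T \<gamma> N n = tmesh T \<gamma> N n - tmesh T \<gamma> N (n - 1)"

definition lin_interp ::
  "real \<Rightarrow> real \<Rightarrow> nat \<Rightarrow> (real \<Rightarrow> 'a::real_normed_vector) \<Rightarrow> nat \<Rightarrow> real \<Rightarrow> 'a" where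
  "lin_interp T \<gamma> N u n t =
     ((tmesh T \<gamma> N n - t) / tstep T \<gamma> N n) *\<^sub>R u (tmesh T \<gamma> N (n - 1))
   + ((t - tmesh T \<gamma> N (n - 1)) / tstep T \<gamma> N n) *\<^sub>R u (tmesh T \<gamma> N n)"

definition is_implicit_interp ::
  "real \<Rightarrow> real \<Rightarrow> nat \<Rightarrow> (real \<Rightarrow> 'a::banach) \<Rightarrow> (real \<Rightarrow> 'a) \<Rightarrow> bool" where
  "is_implicit_interp T \<gamma> N u uh \<longleftrightarrow>
     continuous_on {0..T} uh \<and>
     uh 0 = u 0 \<and>
     (\<forall>n\<in>{1..N}. \<forall>t\<in>{tmesh T \<gamma> N (n - 1)..tmesh T \<gamma> N n}.
        uh t = lin_interp T \<gamma> N uh n t) \<and>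
     (\<forall>n\<in>{1..N}. integral {tmesh T \<gamma> N (n - 1)..tmesh T \<gamma> N n} uh
                 = integral {tmesh T \<gamma> N (n - 1)..tmesh T \<gamma> N n} u)"

definition Delta ::
  "real \<Rightarrow> real \<Rightarrow> nat \<Rightarrow> (real \<Rightarrow> 'a::real_normed_vector) \<Rightarrow> nat \<Rightarrow> 'a" where
  "Delta T \<gamma> N u j = (2 / tstep T \<gamma> N j) *\<^sub>R
     integral {tmesh T \<gamma> N (j - 1)..tmesh T \<gamma> N j} (\<lambda>t. u t - lin_interp T \<gamma> N u j t)"

end

theory Submission
  imports Defs
begin

(* Integrating the kernel (t_j - t)(t - t_(j-1)) against u'' by parts twice shows that Delta_j is
   the scaled error of the trapezoidal rule for the integral of u over I_j.  The boundary terms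
   vanish even on the first interval, where u'' may be singular, because t u'(t) tends to 0 as
   t tends to 0.  The implicit interpolant is linear on I_j and has the same mean as u there, so
   the trapezoidal rule applied to its nodal values is exact; hence Delta_j = -(psi_(j-1) + psi_j),
   and since psi_0 = 0 this recursion unwinds into the alternating sum. *)

lemma tmesh_0 [simp]: "tmesh T \<gamma> N 0 = 0"
  by (simp add: tmesh_def)

lemma tmesh_nonneg: "0 \<le> tmesh T \<gamma> N k"
  by (simp add: tmesh_def)

lemma tmesh_strict_mono:
  assumes "T > 0" "\<gamma> > 0" "N \<ge> 1"
  shows "strict_mono (tmesh T \<gamma> N)"
proof (rule strict_monoI)
  fix k l :: nat assume "k < l"
  moreover have "mesh_tau T \<gamma> N > 0" using assms by (simp add: mesh_tau_def)
  ultimately show "tmesh T \<gamma> N k < tmesh T \<gamma> N l"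
    unfolding tmesh_def using assms by (intro powr_less_mono2) auto
qed

lemma tmesh_last:
  assumes "T > 0" "\<gamma> > 0" "N \<ge> 1"
  shows "tmesh T \<gamma> N N = T"
  using assms by (simp add: tmesh_def mesh_tau_def powr_powr)

lemma tmesh_subinterval:
  assumes "T > 0" "\<gamma> > 0" "j \<in> {1..N}"
  shows "0 \<le> tmesh T \<gamma> N (j - 1)" "tmesh T \<gamma> N (j - 1) < tmesh T \<gamma> N j"
    "tmesh T \<gamma> N j \<le> T"
proof -
  have N: "N \<ge> 1" using assms by simp
  note mono = tmesh_strict_mono[OF assms(1,2) N]
  show "0 \<le> tmesh T \<gamma> N (j - 1)" by (rule tmesh_nonneg)
  show "tmesh T \<gamma> N (j - 1) < tmesh T \<gamma> N j" using assms by (intro strict_monoD[OF mono]) auto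
  show "tmesh T \<gamma> N j \<le> T"
    using strict_mono_leD[OF mono, of j N] assms tmesh_last[OF assms(1,2) N] by simp
qed

lemma has_integral_affine_interpolant:
  fixes x y :: "'a::real_normed_vector" and a b :: real
  assumes "a < b"
  shows "((\<lambda>t. ((b - t) / (b - a)) *\<^sub>R x + ((t - a) / (b - a)) *\<^sub>R y)
           has_integral ((b - a) / 2) *\<^sub>R (x + y)) {a..b}"
proof -
  have id: "((\<lambda>t. t) has_integral (b\<^sup>2 - a\<^sup>2) / 2) {a..b}"
    using assms by (intro ident_has_integral) simp
  have "((\<lambda>t. b - t) has_integral (b - a)\<^sup>2 / 2) {a..b}"
    by (rule has_integral_eq_rhs[OF has_integral_diff[OF has_integral_const_real id]])
      (use assms in \<open>simp add: power2_eq_square field_simps\<close>)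
  then have left: "((\<lambda>t. (b - t) / (b - a)) has_integral (b - a) / 2) {a..b}"
    by (rule has_integral_eq_rhs[OF has_integral_divide])
      (use assms in \<open>simp add: power2_eq_square field_simps\<close>)
  have "((\<lambda>t. t - a) has_integral (b - a)\<^sup>2 / 2) {a..b}"
    by (rule has_integral_eq_rhs[OF has_integral_diff[OF id has_integral_const_real]])
      (use assms in \<open>simp add: power2_eq_square field_simps\<close>)
  then have right: "((\<lambda>t. (t - a) / (b - a)) has_integral (b - a) / 2) {a..b}"
    by (rule has_integral_eq_rhs[OF has_integral_divide])
      (use assms in \<open>simp add: power2_eq_square field_simps\<close>)
  show ?thesis
    using has_integral_add[OF has_integral_scaleR_left[OF left] has_integral_scaleR_left[OF right]]
    by (simp add: scaleR_add_right)
qed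

lemma has_integral_lin_interp:
  fixes v :: "real \<Rightarrow> 'a::real_normed_vector"
  assumes "tmesh T \<gamma> N (j - 1) < tmesh T \<gamma> N j"
  shows "(lin_interp T \<gamma> N v j has_integral
           (tstep T \<gamma> N j / 2) *\<^sub>R (v (tmesh T \<gamma> N (j - 1)) + v (tmesh T \<gamma> N j)))
         {tmesh T \<gamma> N (j - 1)..tmesh T \<gamma> N j}"
  using has_integral_affine_interpolant[OF assms]
  by (simp add: lin_interp_def[abs_def] tstep_def)

lemma Delta_eq_trapezoid_error:
  fixes u :: "real \<Rightarrow> 'a::banach"
  assumes "tmesh T \<gamma> N (j - 1) < tmesh T \<gamma> N j"
    and "continuous_on {tmesh T \<gamma> N (j - 1)..tmesh T \<gamma> N j} u"
  shows "Delta T \<gamma> N u j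
           = (2 / tstep T \<gamma> N j) *\<^sub>R integral {tmesh T \<gamma> N (j - 1)..tmesh T \<gamma> N j} u
             - (u (tmesh T \<gamma> N (j - 1)) + u (tmesh T \<gamma> N j))"
proof -
  have "tstep T \<gamma> N j \<noteq> 0" using assms(1) by (simp add: tstep_def)
  moreover have
    "integral {tmesh T \<gamma> N (j - 1)..tmesh T \<gamma> N j} (\<lambda>t. u t - lin_interp T \<gamma> N u j t)
      = integral {tmesh T \<gamma> N (j - 1)..tmesh T \<gamma> N j} u
        - (tstep T \<gamma> N j / 2) *\<^sub>R (u (tmesh T \<gamma> N (j - 1)) + u (tmesh T \<gamma> N j))"
    using has_integral_lin_interp[OF assms(1)]
    by (intro integral_unique has_integral_diff integrable_integral
        integrable_continuous_interval assms(2))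
  ultimately show ?thesis
    by (simp add: Delta_def scaleR_diff_right)
qed

lemma integral_eq_trapezoid_implicit_interp:
  assumes "is_implicit_interp T \<gamma> N u uh" "j \<in> {1..N}"
    and "tmesh T \<gamma> N (j - 1) < tmesh T \<gamma> N j"
  shows "integral {tmesh T \<gamma> N (j - 1)..tmesh T \<gamma> N j} u
           = (tstep T \<gamma> N j / 2) *\<^sub>R (uh (tmesh T \<gamma> N (j - 1)) + uh (tmesh T \<gamma> N j))"
proof -
  have "integral {tmesh T \<gamma> N (j - 1)..tmesh T \<gamma> N j} u
      = integral {tmesh T \<gamma> N (j - 1)..tmesh T \<gamma> N j} uh"
    using assms(1,2) unfolding is_implicit_interp_def by simp
  also have "\<dots> = integral {tmesh T \<gamma> N (j - 1)..tmesh T \<gamma> N j} (lin_interp T \<gamma> N uh j)"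
    using assms(1,2) unfolding is_implicit_interp_def by (intro integral_cong) simp
  finally show ?thesis
    using integral_unique[OF has_integral_lin_interp[OF assms(3)]] by simp
qed

lemma Delta_eq_implicit_interp_errors:
  fixes u uh :: "real \<Rightarrow> 'a::banach"
  assumes "is_implicit_interp T \<gamma> N u uh" "j \<in> {1..N}"
    and "tmesh T \<gamma> N (j - 1) < tmesh T \<gamma> N j"
    and "continuous_on {tmesh T \<gamma> N (j - 1)..tmesh T \<gamma> N j} u"
  shows "Delta T \<gamma> N u j = - ((u (tmesh T \<gamma> N (j - 1)) - uh (tmesh T \<gamma> N (j - 1)))
                                + (u (tmesh T \<gamma> N j) - uh (tmesh T \<gamma> N j)))"
proof -
  have "tstep T \<gamma> N j \<noteq> 0" using assms(3) by (simp add: tstep_def)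
  then show ?thesis
    unfolding Delta_eq_trapezoid_error[OF assms(3,4)]
      integral_eq_trapezoid_implicit_interp[OF assms(1-3)]
    by (simp add: algebra_simps)
qed

lemma sum_alternating_telescope:
  fixes \<psi> \<Delta> :: "nat \<Rightarrow> 'a::real_vector"
  assumes "\<psi> 0 = 0" and "\<And>j. j \<in> {1..n} \<Longrightarrow> \<Delta> j = - (\<psi> (j - 1) + \<psi> j)"
  shows "\<psi> n = (\<Sum>j=1..n. (-1) ^ (n + j + 1) *\<^sub>R \<Delta> j)"
  using assms(2)
proof (induction n)
  case 0
  then show ?case using assms(1) by simp
next
  case (Suc n)
  have "\<psi> (Suc n) = - \<Delta> (Suc n) - \<psi> n"
    using Suc.prems[of "Suc n"] by simp
  also have "\<dots> = - \<Delta> (Suc n) - (\<Sum>j=1..n. (-1) ^ (n + j + 1) *\<^sub>R \<Delta> j)"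
    using Suc by simp
  also have "\<dots> = (\<Sum>j=1..Suc n. (-1) ^ (Suc n + j + 1) *\<^sub>R \<Delta> j)"
    by (simp add: sum_negf[symmetric] algebra_simps)
  finally show ?case .
qed

lemma tendsto_weighted_derivative_at_right_0:
  fixes f f' :: "real \<Rightarrow> 'a::real_normed_vector"
  assumes s: "0 < s" and \<alpha>: "0 < \<alpha>" "\<alpha> < 1" and C: "0 \<le> C"
    and deriv: "\<And>t. t \<in> {0<..s} \<Longrightarrow> (f has_vector_derivative f' t) (at t)"
    and bound: "\<And>t. t \<in> {0<..<s} \<Longrightarrow> norm (f' t) \<le> C * t powr (\<alpha> - 2)"
  shows "((\<lambda>t. t *\<^sub>R f t) \<longlongrightarrow> 0) (at_right 0)"
proof -
  define D where "D = C / (1 - \<alpha>)"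
  have D: "0 \<le> D" using C \<alpha> by (simp add: D_def)
  have growth: "norm (f t) \<le> norm (f s) + D * t powr (\<alpha> - 1)" if t: "0 < t" "t < s" for t
  proof -
    have "norm (f s - f t) \<le> - D * s powr (\<alpha> - 1) - - D * t powr (\<alpha> - 1)"
    proof (rule differentiable_bound_general[where f' = f' and \<phi>' = "\<lambda>r. C * r powr (\<alpha> - 2)"])
      show "continuous_on {t..s} f"
        using t by (intro continuous_at_imp_continuous_on ballI has_vector_derivative_continuous[OF deriv]) auto
      show "continuous_on {t..s} (\<lambda>r. - D * r powr (\<alpha> - 1))"
        using t by (intro continuous_intros) auto
      fix x assume x: "t < x" "x < s"
      show "(f has_vector_derivative f' x) (at x)" "norm (f' x) \<le> C * x powr (\<alpha> - 2)"
        using x t by (auto intro!: deriv bound)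
      have "((\<lambda>r. - D * r powr (\<alpha> - 1)) has_real_derivative - D * ((\<alpha> - 1) * x powr (\<alpha> - 1 - 1))) (at x)"
        using x t by (auto intro!: derivative_eq_intros)
      moreover have "- D * ((\<alpha> - 1) * x powr (\<alpha> - 1 - 1)) = C * x powr (\<alpha> - 2)"
        using \<alpha> by (simp add: D_def field_simps)
      ultimately show "((\<lambda>r. - D * r powr (\<alpha> - 1)) has_vector_derivative C * x powr (\<alpha> - 2)) (at x)"
        by (simp add: has_real_derivative_iff_has_vector_derivative)
    qed (use t in simp)
    then show ?thesis
      using norm_triangle_ineq2[of "f t" "f s"] mult_nonneg_nonneg[OF D powr_ge_zero[of s "\<alpha> - 1"]]
      by (simp add: norm_minus_commute)
  qed
  show ?thesis
  proof (rule Lim_null_comparison)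
    show "\<forall>\<^sub>F t in at_right 0. norm (t *\<^sub>R f t) \<le> t * norm (f s) + D * t powr \<alpha>"
      unfolding eventually_at_right_field
    proof (intro exI[of _ s] conjI allI impI)
      fix t :: real assume t: "0 < t" "t < s"
      have "norm (t *\<^sub>R f t) \<le> t * (norm (f s) + D * t powr (\<alpha> - 1))"
        using growth[OF t] t by (simp add: mult_left_mono)
      also have "\<dots> = t * norm (f s) + D * t powr \<alpha>"
        using t by (simp add: algebra_simps powr_mult_base)
      finally show "norm (t *\<^sub>R f t) \<le> t * norm (f s) + D * t powr \<alpha>" .
    qed (fact s)
    have "((\<lambda>t. t powr \<alpha>) \<longlongrightarrow> 0) (at_right 0)"
      using \<alpha> by (intro tendsto_zero_powrI) (auto intro: tendsto_ident_at eventually_at_rightI[of 0 1])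
    then have "((\<lambda>t. t * norm (f s) + D * t powr \<alpha>) \<longlongrightarrow> 0 * norm (f s) + D * 0) (at_right 0)"
      by (intro tendsto_intros tendsto_ident_at)
    then show "((\<lambda>t. t * norm (f s) + D * t powr \<alpha>) \<longlongrightarrow> 0) (at_right 0)"
      by simp
  qed
qed

lemma tendsto_weighted_bounded_derivative_at_left:
  fixes f f' :: "real \<Rightarrow> 'a::real_normed_vector"
  assumes s: "s < b"
    and deriv: "\<And>t. t \<in> {s..<b} \<Longrightarrow> (f has_vector_derivative f' t) (at t)"
    and bound: "\<And>t. t \<in> {s<..<b} \<Longrightarrow> norm (f' t) \<le> M"
  shows "((\<lambda>t. (b - t) *\<^sub>R f t) \<longlongrightarrow> 0) (at_left b)"
proof -
  have growth: "norm (f t) \<le> norm (f s) + M * (b - s)" if t: "s < t" "t < b" for t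
  proof -
    have "norm (f t - f s) \<le> M * t - M * s"
    proof (rule differentiable_bound_general[where f' = f' and \<phi>' = "\<lambda>_. M"])
      show "continuous_on {s..t} f"
        using t by (intro continuous_at_imp_continuous_on ballI has_vector_derivative_continuous[OF deriv]) auto
      fix x assume x: "s < x" "x < t"
      show "(f has_vector_derivative f' x) (at x)" "norm (f' x) \<le> M"
        using x t by (auto intro!: deriv bound)
      show "((*) M has_vector_derivative M) (at x)"
        by (auto intro!: derivative_eq_intros simp: has_real_derivative_iff_has_vector_derivative[symmetric])
    qed (use t in \<open>auto intro!: continuous_intros\<close>)
    moreover have "0 \<le> M"
      using t order_trans[OF norm_ge_zero bound[of "(s + t) / 2"]] by simp
    ultimately show ?thesis
      using t norm_triangle_ineq2[of "f t" "f s"] mult_left_mono[of t b M]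
      by (simp add: right_diff_distrib)
  qed
  show ?thesis
  proof (rule Lim_null_comparison)
    show "\<forall>\<^sub>F t in at_left b. norm ((b - t) *\<^sub>R f t) \<le> (b - t) * (norm (f s) + M * (b - s))"
      unfolding eventually_at_left_field
      by (intro exI[of _ s] conjI allI impI s) (auto intro!: mult_left_mono growth)
    show "((\<lambda>t. (b - t) * (norm (f s) + M * (b - s))) \<longlongrightarrow> 0) (at_left b)"
      by (auto intro!: tendsto_eq_intros tendsto_ident_at)
  qed
qed

lemma has_integral_trapezoid_kernel:
  fixes u u' u'' :: "real \<Rightarrow> 'a::banach"
  assumes ab: "a < b"
    and cont: "continuous_on {a..b} u"
    and d1: "\<And>t. t \<in> {a<..<b} \<Longrightarrow> (u has_vector_derivative u' t) (at t)"
    and d2: "\<And>t. t \<in> {a<..<b} \<Longrightarrow> (u' has_vector_derivative u'' t) (at t)"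
    and lim_a: "((\<lambda>t. (t - a) *\<^sub>R u' t) \<longlongrightarrow> 0) (at_right a)"
    and lim_b: "((\<lambda>t. (b - t) *\<^sub>R u' t) \<longlongrightarrow> 0) (at_left b)"
  shows "((\<lambda>t. ((b - t) * (t - a)) *\<^sub>R u'' t) has_integral
           (b - a) *\<^sub>R (u a + u b) - 2 *\<^sub>R integral {a..b} u) {a..b}"
proof -
  define W where "W t = ((b - t) * (t - a)) *\<^sub>R u' t" for t
  define G where "G t = W t - (a + b - 2 * t) *\<^sub>R u t - 2 *\<^sub>R integral {a..t} u" for t
  have W_cont: "continuous_on {a..b} W"
  proof (rule continuous_on_IccI[OF _ _ _ ab])
    have "((\<lambda>t. (b - t) *\<^sub>R ((t - a) *\<^sub>R u' t)) \<longlongrightarrow> (b - a) *\<^sub>R 0) (at_right a)"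
      by (intro tendsto_intros lim_a tendsto_ident_at)
    then show "(W \<longlongrightarrow> W a) (at_right a)" by (simp add: W_def[abs_def])
    have "((\<lambda>t. (t - a) *\<^sub>R ((b - t) *\<^sub>R u' t)) \<longlongrightarrow> (b - a) *\<^sub>R 0) (at_left b)"
      by (intro tendsto_intros lim_b tendsto_ident_at)
    then show "(W \<longlongrightarrow> W b) (at_left b)" by (simp add: W_def[abs_def] mult.commute)
    fix x assume "a < x" "x < b"
    then have "isCont u' x" using d2 by (intro has_vector_derivative_continuous) auto
    then show "(W \<longlongrightarrow> W x) (at x)"
      unfolding W_def isCont_def by (intro tendsto_intros)
  qed
  have int_cont: "continuous_on {a..b} (\<lambda>t. integral {a..t} u)"
    by (rule indefinite_integral_continuous_1[OF integrable_continuous_interval[OF cont]])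
  have "((\<lambda>t. ((b - t) * (t - a)) *\<^sub>R u'' t) has_integral G b - G a) {a..b}"
  proof (rule fundamental_theorem_of_calculus_interior)
    show "continuous_on {a..b} G"
      unfolding G_def by (intro continuous_intros W_cont cont int_cont)
    fix x assume x: "x \<in> {a<..<b}"
    have "((\<lambda>t. integral {a..t} u) has_vector_derivative u x) (at x)"
      using integral_has_vector_derivative[OF cont, of x] x by (simp add: at_within_Icc_at)
    then have "(G has_vector_derivative
        (((b - x) * (x - a)) *\<^sub>R u'' x + (a + b - 2 * x) *\<^sub>R u' x)
        - ((a + b - 2 * x) *\<^sub>R u' x + (- 2) *\<^sub>R u x) - 2 *\<^sub>R u x) (at x)"
      unfolding G_def W_def using x
      by (auto intro!: derivative_eq_intros d1 d2)
    then show "(G has_vector_derivative ((b - x) * (x - a)) *\<^sub>R u'' x) (at x)"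
      by (rule has_vector_derivative_eq_rhs) (simp add: algebra_simps)
  qed (use ab in simp)
  moreover have "G b - G a = (b - a) *\<^sub>R (u a + u b) - 2 *\<^sub>R integral {a..b} u"
    by (simp add: G_def W_def algebra_simps)
  ultimately show ?thesis by simp
qed

lemma weighted_derivative_tendsto_0_at_endpoints:
  fixes u' u'' :: "real \<Rightarrow> 'a::banach"
  assumes ab: "0 \<le> a" "a < b" "b \<le> T" and \<alpha>: "0 < \<alpha>" "\<alpha> < 1" and C: "0 \<le> C"
    and d2: "\<And>t. t \<in> {0<..<T} \<Longrightarrow> (u' has_vector_derivative u'' t) (at t)"
    and reg: "\<And>t. t \<in> {0<..<T} \<Longrightarrow> norm (u'' t) \<le> C * t powr (\<alpha> - 2)"
  shows "((\<lambda>t. (t - a) *\<^sub>R u' t) \<longlongrightarrow> 0) (at_right a)"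
    and "((\<lambda>t. (b - t) *\<^sub>R u' t) \<longlongrightarrow> 0) (at_left b)"
proof -
  have T: "0 < T" using ab by simp
  have interior: "((\<lambda>t. (t - c) *\<^sub>R u' t) \<longlongrightarrow> 0) (at c)"
    "((\<lambda>t. (c - t) *\<^sub>R u' t) \<longlongrightarrow> 0) (at c)" if "c \<in> {0<..<T}" for c
  proof -
    have "(u' \<longlongrightarrow> u' c) (at c)"
      using has_vector_derivative_continuous[OF d2[OF that]] by (simp add: isCont_def)
    then show "((\<lambda>t. (t - c) *\<^sub>R u' t) \<longlongrightarrow> 0) (at c)"
      "((\<lambda>t. (c - t) *\<^sub>R u' t) \<longlongrightarrow> 0) (at c)"
      by (auto intro!: tendsto_eq_intros tendsto_ident_at)
  qed
  show "((\<lambda>t. (t - a) *\<^sub>R u' t) \<longlongrightarrow> 0) (at_right a)"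
  proof (cases "a = 0")
    case True
    have "((\<lambda>t. t *\<^sub>R u' t) \<longlongrightarrow> 0) (at_right 0)"
      using T by (intro tendsto_weighted_derivative_at_right_0[OF _ \<alpha> C, of "T / 2" u' u''] d2 reg) auto
    then show ?thesis using True by simp
  next
    case False
    then show ?thesis using interior(1)[of a] ab by (simp add: filterlim_at_split)
  qed
  show "((\<lambda>t. (b - t) *\<^sub>R u' t) \<longlongrightarrow> 0) (at_left b)"
  proof (cases "b = T")
    case True
    have "norm (u'' t) \<le> C * (T / 2) powr (\<alpha> - 2)" if "t \<in> {T / 2<..<T}" for t
    proof -
      have "norm (u'' t) \<le> C * t powr (\<alpha> - 2)" using that T by (intro reg) auto
      also have "\<dots> \<le> C * (T / 2) powr (\<alpha> - 2)"
        using that T C \<alpha> by (intro mult_left_mono powr_mono2') auto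
      finally show ?thesis .
    qed
    then show ?thesis
      unfolding True using T by (intro tendsto_weighted_bounded_derivative_at_left[of "T / 2" T u' u''] d2) auto
  next
    case False
    then show ?thesis using interior(2)[of b] ab by (simp add: filterlim_at_split)
  qed
qed

lemma Delta_eq_kernel_integral:
  fixes u u' u'' :: "real \<Rightarrow> 'a::banach"
  assumes T: "T > 0" and \<gamma>: "\<gamma> > 0" and j: "j \<in> {1..N}"
    and \<alpha>: "0 < \<alpha>" "\<alpha> < 1" and C: "0 \<le> C"
    and cont: "continuous_on {0..T} u"
    and d1: "\<And>t. t \<in> {0<..<T} \<Longrightarrow> (u has_vector_derivative u' t) (at t)"
    and d2: "\<And>t. t \<in> {0<..<T} \<Longrightarrow> (u' has_vector_derivative u'' t) (at t)"
    and reg: "\<And>t. t \<in> {0<..<T} \<Longrightarrow> norm (u'' t) \<le> C * t powr (\<alpha> - 2)"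
  shows "(\<lambda>t. ((tmesh T \<gamma> N j - t) * (t - tmesh T \<gamma> N (j - 1))) *\<^sub>R u'' t)
           integrable_on {tmesh T \<gamma> N (j - 1)..tmesh T \<gamma> N j}"
    and "Delta T \<gamma> N u j = - (1 / tstep T \<gamma> N j) *\<^sub>R
           integral {tmesh T \<gamma> N (j - 1)..tmesh T \<gamma> N j}
             (\<lambda>t. ((tmesh T \<gamma> N j - t) * (t - tmesh T \<gamma> N (j - 1))) *\<^sub>R u'' t)"
proof -
  define a b where "a = tmesh T \<gamma> N (j - 1)" and "b = tmesh T \<gamma> N j"
  have ab: "0 \<le> a" "a < b" "b \<le> T"
    using tmesh_subinterval[OF T \<gamma> j] by (simp_all add: a_def b_def)
  have cont_ab: "continuous_on {a..b} u"
    using ab by (auto intro: continuous_on_subset[OF cont])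
  have kernel: "((\<lambda>t. ((b - t) * (t - a)) *\<^sub>R u'' t) has_integral
                  (b - a) *\<^sub>R (u a + u b) - 2 *\<^sub>R integral {a..b} u) {a..b}"
    by (rule has_integral_trapezoid_kernel[OF ab(2) cont_ab _ _
          weighted_derivative_tendsto_0_at_endpoints[OF ab \<alpha> C d2 reg]])
      (use ab in \<open>auto intro!: d1 d2\<close>)
  then show "(\<lambda>t. ((tmesh T \<gamma> N j - t) * (t - tmesh T \<gamma> N (j - 1))) *\<^sub>R u'' t)
      integrable_on {tmesh T \<gamma> N (j - 1)..tmesh T \<gamma> N j}"
    by (auto simp: a_def b_def)
  have "tstep T \<gamma> N j = b - a" by (simp add: tstep_def a_def b_def)
  then show "Delta T \<gamma> N u j = - (1 / tstep T \<gamma> N j) *\<^sub>R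
      integral {tmesh T \<gamma> N (j - 1)..tmesh T \<gamma> N j}
        (\<lambda>t. ((tmesh T \<gamma> N j - t) * (t - tmesh T \<gamma> N (j - 1))) *\<^sub>R u'' t)"
    using Delta_eq_trapezoid_error[of T \<gamma> N j u] integral_unique[OF kernel] ab cont_ab
    by (simp add: a_def b_def scaleR_diff_right)
qed

theorem lemma3p1:
  fixes u u' u'' uh :: "real \<Rightarrow> 'a::banach"
    and T \<gamma> \<alpha> C :: real and N n :: nat
  assumes T: "T > 0" and gam: "\<gamma> \<ge> 1" and N: "N \<ge> 1"
    and alpha: "0 < \<alpha>" "\<alpha> < 1"
    and cont: "continuous_on {0..T} u"
    and d1: "\<And>t. t \<in> {0<..<T} \<Longrightarrow> (u has_vector_derivative u' t) (at t)"
    and d2: "\<And>t. t \<in> {0<..<T} \<Longrightarrow> (u' has_vector_derivative u'' t) (at t)"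
    and cont2: "continuous_on {0<..<T} u''"
    and reg: "\<And>t. t \<in> {0<..<T} \<Longrightarrow> norm (u'' t) \<le> C * t powr (\<alpha> - 2)"
    and uh: "is_implicit_interp T \<gamma> N u uh"
    and n: "1 \<le> n" "n \<le> N"
  shows "u (tmesh T \<gamma> N n) - uh (tmesh T \<gamma> N n)
           = (\<Sum>j=1..n. (-1) ^ (n + j + 1) *\<^sub>R Delta T \<gamma> N u j)
       \<and> (\<forall>j\<in>{1..n}.
           (\<lambda>t. ((tmesh T \<gamma> N j - t) * (t - tmesh T \<gamma> N (j - 1))) *\<^sub>R u'' t)
              integrable_on {tmesh T \<gamma> N (j - 1)..tmesh T \<gamma> N j}
         \<and> Delta T \<gamma> N u j = - (1 / tstep T \<gamma> N j) *\<^sub>R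
              integral {tmesh T \<gamma> N (j - 1)..tmesh T \<gamma> N j}
                (\<lambda>t. ((tmesh T \<gamma> N j - t) * (t - tmesh T \<gamma> N (j - 1))) *\<^sub>R u'' t))"
proof -
  have \<gamma>: "\<gamma> > 0" using gam by simp
  have C: "0 \<le> C"
  proof -
    have "0 \<le> C * (T / 2) powr (\<alpha> - 2)"
      using T order_trans[OF norm_ge_zero reg[of "T / 2"]] by simp
    then show ?thesis using T by (simp add: zero_le_mult_iff)
  qed
  have "u (tmesh T \<gamma> N n) - uh (tmesh T \<gamma> N n)
      = (\<Sum>j=1..n. (-1) ^ (n + j + 1) *\<^sub>R Delta T \<gamma> N u j)"
  proof (rule sum_alternating_telescope[where \<psi> = "\<lambda>k. u (tmesh T \<gamma> N k) - uh (tmesh T \<gamma> N k)"])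
    show "u (tmesh T \<gamma> N 0) - uh (tmesh T \<gamma> N 0) = 0"
      using uh by (simp add: is_implicit_interp_def)
    fix j assume "j \<in> {1..n}"
    then have j: "j \<in> {1..N}" using n by simp
    note subinterval = tmesh_subinterval[OF T \<gamma> j]
    show "Delta T \<gamma> N u j = - ((u (tmesh T \<gamma> N (j - 1)) - uh (tmesh T \<gamma> N (j - 1)))
                                 + (u (tmesh T \<gamma> N j) - uh (tmesh T \<gamma> N j)))"
      using subinterval
      by (intro Delta_eq_implicit_interp_errors[OF uh j] continuous_on_subset[OF cont]) auto
  qed
  moreover have "\<forall>j\<in>{1..n}.
      (\<lambda>t. ((tmesh T \<gamma> N j - t) * (t - tmesh T \<gamma> N (j - 1))) *\<^sub>R u'' t)
        integrable_on {tmesh T \<gamma> N (j - 1)..tmesh T \<gamma> N j}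
      \<and> Delta T \<gamma> N u j = - (1 / tstep T \<gamma> N j) *\<^sub>R
          integral {tmesh T \<gamma> N (j - 1)..tmesh T \<gamma> N j}
            (\<lambda>t. ((tmesh T \<gamma> N j - t) * (t - tmesh T \<gamma> N (j - 1))) *\<^sub>R u'' t)"
    using Delta_eq_kernel_integral[OF T \<gamma> _ alpha C cont d1 d2 reg] n by auto
  ultimately show ?thesis ..
qed

end
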